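(* Let $m\ge 1$ and $n\ge 1$ be integers. For $0\le s\le m$ define $$Q_{m,s}(q)=\frac{\prod_{j=0}^{s}(1-q^{2m-2j+1})}{(1-q)^{s}(1-q^2)^{2s}}\sum_{k=0}^{s}\frac{(-1)^{s-k}}{1-q^{2m-2k+1}}\left[\binom{2m-1}{k}-\binom{2m-1}{k-2}\right]\sum_{i=0}^{s-k}\binom{m-s+i}{i}\left[\binom{m-k-i}{s-k-i}q^{2s-2k-2i}+\binom{m-k-i-1}{s-k-i-1}q^{2s-2k-2i-1}\right].$$ Then each $Q_{m,s}(q)$ is a polynomial in $\mathbb{Z}[q]$, and $$S_{2m,n}(q)=\sum_{k=0}^{m}(-1)^kQ_{m,k}(q^{1/2})\frac{(1-q^{n+\frac12})(1-q^n)^{m-k}(1-q^{n+1})^{m-k}(1-q^{1/2})^kq^{kn}}{(1-q^2)(1-q)^{2m-2k-1}\prod_{i=0}^{k}(1-q^{m-i+\frac12})}.$$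
   Context: $q$ is an indeterminate and $q^{1/2}$ a fixed formal square root of $q$; identities are identities of rational functions in $q^{1/2}$. For integers $m,n\ge1$, $$S_{m,n}(q)=\sum_{k=1}^{n}\frac{1-q^{2k}}{1-q^2}\left(\frac{1-q^k}{1-q}\right)^{m-1}q^{\frac{m+1}{2}(n-k)}.$$ Binomial coefficients $\binom{a}{b}$ with integers $a,b$ are taken to be $0$ when $b<0$ or when $0\le a<b$. *)

theory Defs
  imports Complex_Main "HOL-Computational_Algebra.Polynomial" "HOL-Computational_Algebra.Fraction_Field"
begin

text \<open>Binomial coefficient with integer arguments: 0 when b < 0 or 0 <= a < b
  (automatic from nat choose); for a < 0 the usual generalized binomial
  (-1)^b (b-a-1 choose b), which never occurs in the statement.\<close>
definition ibinom :: "int \<Rightarrow> int \<Rightarrow> int" where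
  "ibinom a b = (if b < 0 then 0
     else if a \<ge> 0 then int (nat a choose nat b)
     else (-1)^(nat b) * int (nat (b - a - 1) choose nat b))"

text \<open>S_{m,n}(q), written as a function of t = q^(1/2).\<close>
definition S :: "nat \<Rightarrow> nat \<Rightarrow> 'a::field \<Rightarrow> 'a" where
  "S m n t = (\<Sum>k=1..n. (1 - t^(4*k)) / (1 - t^4) * ((1 - t^(2*k)) / (1 - t^2))^(m-1)
                 * t^((m+1)*(n-k)))"

definition Q :: "nat \<Rightarrow> nat \<Rightarrow> 'a::field \<Rightarrow> 'a" where
  "Q m s q = (\<Prod>j=0..s. 1 - q^(2*m-2*j+1)) / ((1 - q)^s * (1 - q^2)^(2*s))
     * (\<Sum>k=0..s. (-1)^(s-k) / (1 - q^(2*m-2*k+1))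
          * of_int (ibinom (2*int m - 1) (int k) - ibinom (2*int m - 1) (int k - 2))
          * (\<Sum>i=0..s-k. of_int (ibinom (int m - int s + int i) (int i))
               * (of_int (ibinom (int m - int k - int i) (int s - int k - int i))
                    * q powi (2*int s - 2*int k - 2*int i)
                  + of_int (ibinom (int m - int k - int i - 1) (int s - int k - int i - 1))
                    * q powi (2*int s - 2*int k - 2*int i - 1))))"

definition X :: "int poly fract" where
  "X = Fract [:0, 1:] 1"

end

(* Write t = q^(1/2) and x = q^n.

   Since S_{2m,n+1} = t^(2m+1) S_{2m,n} + (the summand k = n+1), and since
   (1 - y^2)(1 - y)^(2m-1) is a palindromic polynomial whose coefficients are, up to sign, the
   numbers binom(2m-1,j) - binom(2m-1,j-2), the function S_{2m,n} is an explicit linear combination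
   of x^l - t^(2m-2l+1) x^(2m+1-l), l = 0..m.  On the other side, the k-th summand equals
   c_k x^k (1 - t x) ((1 - x)(1 - t^2 x))^(m-k), where c_k is a combination of the inner sums of
   Q_{m,k}.  These inner sums are convolutions of binomial coefficients, and a generating function
   computation shows that summing them against x^k (1 - t x) ((1 - x)(1 - t^2 x))^(m-k) over k >= l
   gives exactly x^l - t^(2m-2l+1) x^(2m+1-l).

   Q_{m,k} (1 - t)^k (1 - t^2)^(2k) is visibly a polynomial, so it suffices that
   Q_{m,k} has no pole at t = 1 or t = -1.  Writing (1 - x)(1 - t^2 x) = (1 - t^2)^2 x nu_n with
   nu_n = [n]_q [n+1]_q / q^n, the identity says S_{2m,n} = [2n+1]_t q^(nm) Psi(nu_n) for a polynomial
   Psi of degree m whose coefficients are the Q_{m,k} up to factors that are units at t = 1 and t = -1.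
   The values S_{2m,n} are polynomials and the differences nu_i - nu_j = [i-j]_q [i+j+1]_q / q^i are
   such units, so Newton interpolation at nu_0, ..., nu_m gives the coefficients of Psi without
   poles at t = 1 and t = -1. *)

theory Submission
  imports Defs "HOL-Computational_Algebra.Formal_Power_Series" "HOL-Computational_Algebra.Polynomial_Factorial"
begin

section \<open>A generating function identity\<close>

definition neg_binomial_fps :: "'a::comm_ring_1 \<Rightarrow> nat \<Rightarrow> 'a fps" where
  "neg_binomial_fps c p = Abs_fps (\<lambda>i. of_nat ((p + i) choose i) * c^i)"

lemma neg_binomial_fps_0: "(1 - fps_const c * fps_X) * neg_binomial_fps c 0 = 1"
proof (rule fps_ext)
  fix n
  show "fps_nth ((1 - fps_const c * fps_X) * neg_binomial_fps c 0) n = fps_nth 1 n"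
    by (cases n) (simp_all add: neg_binomial_fps_def algebra_simps)
qed

lemma neg_binomial_fps_Suc:
  "(1 - fps_const c * fps_X) * neg_binomial_fps c (Suc p) = neg_binomial_fps c p"
proof (rule fps_ext)
  fix n
  show "fps_nth ((1 - fps_const c * fps_X) * neg_binomial_fps c (Suc p)) n = fps_nth (neg_binomial_fps c p) n"
  proof (cases n)
    case (Suc k)
    have "(Suc p + Suc k) choose Suc k = (p + Suc k choose Suc k) + (Suc p + k choose k)"
      by simp
    then show ?thesis
      using Suc by (simp add: neg_binomial_fps_def algebra_simps)
  qed (simp add: neg_binomial_fps_def)
qed

lemma telescoping_geometric_sum:
  fixes V w :: "'a::comm_ring_1"
  assumes "V * E 0 = 1" and "\<And>p. V * E (Suc p) = E p"
  shows "(V - w) * (\<Sum>p=0..M. w^p * E p) = 1 - w^Suc M * E M"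
proof (induction M)
  case (Suc M)
  have "(V - w) * (\<Sum>p=0..Suc M. w^p * E p)
      = (V - w) * (\<Sum>p=0..M. w^p * E p) + w^Suc M * (V * E (Suc M)) - w^Suc (Suc M) * E (Suc M)"
    by (simp add: algebra_simps)
  then show ?case using Suc assms(2) by simp
qed (simp add: left_diff_distrib assms(1))

definition binom_conv :: "'a::comm_ring_1 \<Rightarrow> nat \<Rightarrow> nat \<Rightarrow> 'a" where
  "binom_conv q N r = (\<Sum>i=0..r. of_nat ((N + i choose i) * (N + (r - i) choose (r - i))) * q^(r - i))"

lemma fps_nth_neg_binomial_fps_mult:
  "fps_nth (neg_binomial_fps x N * neg_binomial_fps (q * x) N) r = binom_conv q N r * x^r"
proof -
  have "fps_nth (neg_binomial_fps x N * neg_binomial_fps (q * x) N) r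
      = (\<Sum>i=0..r. (of_nat (N + i choose i) * x^i) * (of_nat (N + (r - i) choose (r - i)) * (q * x)^(r - i)))"
    by (simp add: fps_mult_nth neg_binomial_fps_def)
  also have "\<dots> = (\<Sum>i=0..r. of_nat ((N + i choose i) * (N + (r - i) choose (r - i))) * q^(r - i) * x^r)"
  proof (rule sum.cong[OF refl])
    fix i assume "i \<in> {0..r}"
    then have "x^r = x^i * x^(r - i)" by (simp flip: power_add)
    then show "(of_nat (N + i choose i) * x^i) * (of_nat (N + (r - i) choose (r - i)) * (q * x)^(r - i))
        = of_nat ((N + i choose i) * (N + (r - i) choose (r - i))) * q^(r - i) * x^r"
      by (simp add: power_mult_distrib mult_ac)
  qed
  finally show ?thesis by (simp add: binom_conv_def sum_distrib_right)
qed

lemma sum_binom_conv_eq_geometric: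
  fixes q x :: "'a::comm_ring_1"
  shows "(\<Sum>p=0..M. binom_conv q p (M - p) * x^(M - p) * ((1 - x) * (1 - q * x))^p)
       = (\<Sum>j=0..M. (q * x^2)^j)"
proof -
  define u where "u = (1 - x) * (1 - q * x)"
  define V where "V = (1 - fps_const x * fps_X) * (1 - fps_const (q * x) * fps_X)"
  define E where "E p = neg_binomial_fps x p * neg_binomial_fps (q * x) p" for p
  define w where "w = fps_const u * fps_X"
  define K where "K = (\<Sum>p=0..M. w^p * E p)"
  define L where "L = neg_binomial_fps 1 0 * neg_binomial_fps (q * x^2) 0"
  \<comment> \<open>With \<open>z = fps_X\<close>, K truncates \<open>\<Sum>p. (u z)^p / V^(p+1) = 1 / (V - u z)\<close>, and
    \<open>V - u z = (1 - z) (1 - q x^2 z)\<close> is inverted by L; so K and L agree up to \<open>z^M\<close>.\<close>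
  have V_E: "V * E p = ((1 - fps_const x * fps_X) * neg_binomial_fps x p)
      * ((1 - fps_const (q * x) * fps_X) * neg_binomial_fps (q * x) p)" for p
    by (simp add: V_def E_def mult_ac)
  have "V * E 0 = 1" "V * E (Suc p) = E p" for p
    unfolding V_E by (simp_all only: neg_binomial_fps_0 neg_binomial_fps_Suc E_def) simp
  then have tele: "(V - w) * K = 1 - w^Suc M * E M"
    unfolding K_def by (rule telescoping_geometric_sum)
  have "V - w = (1 - fps_const 1 * fps_X) * (1 - fps_const (q * x^2) * fps_X)"
    unfolding V_def w_def u_def
    by (simp add: algebra_simps power2_eq_square flip: fps_const_mult fps_const_add fps_const_sub)
  then have "L * (V - w) = 1"
    using neg_binomial_fps_0[of 1] neg_binomial_fps_0[of "q * x^2"] by (simp add: L_def mult_ac)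
  then have "K = L * ((V - w) * K)"
    by (simp flip: mult.assoc)
  also have "\<dots> = L - fps_X^Suc M * (fps_const (u^Suc M) * E M * L)"
    by (simp only: tele) (simp add: w_def algebra_simps)
  finally have K_L: "fps_nth K M = fps_nth L M"
    by (simp del: power_Suc add: fps_X_power_mult_nth)
  have "w^p * E p = fps_X^p * (fps_const (u^p) * E p)" for p
    by (simp add: w_def power_mult_distrib mult_ac)
  then have "(\<Sum>p=0..M. binom_conv q p (M - p) * x^(M - p) * u^p) = fps_nth K M"
    by (auto simp: K_def fps_sum_nth fps_X_power_mult_nth E_def fps_nth_neg_binomial_fps_mult
        intro!: sum.cong)
  also have "\<dots> = fps_nth L M"
    by (rule K_L)
  also have "\<dots> = (\<Sum>j=0..M. (q * x^2)^j)"
    using sum.atLeastAtMost_rev[of "\<lambda>j. (q * x^2)^j" 0 M]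
    by (simp add: L_def fps_mult_nth neg_binomial_fps_def)
  finally show ?thesis by (simp add: u_def)
qed

section \<open>The inner sums of Q\<close>

lemma ibinom_of_nat [simp]: "ibinom (int a) (int b) = int (a choose b)"
  by (simp add: ibinom_def)

lemma ibinom_neg [simp]: "b < 0 \<Longrightarrow> ibinom a b = 0"
  by (simp add: ibinom_def)

definition binom_diff :: "nat \<Rightarrow> nat \<Rightarrow> int" where
  "binom_diff m k = ibinom (2 * int m - 1) (int k) - ibinom (2 * int m - 1) (int k - 2)"

definition Q_inner :: "nat \<Rightarrow> nat \<Rightarrow> nat \<Rightarrow> 'a::field \<Rightarrow> 'a" where
  "Q_inner m s k q = (\<Sum>i=0..s-k. of_int (ibinom (int m - int s + int i) (int i))
       * (of_int (ibinom (int m - int k - int i) (int s - int k - int i))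
            * q powi (2*int s - 2*int k - 2*int i)
          + of_int (ibinom (int m - int k - int i - 1) (int s - int k - int i - 1))
            * q powi (2*int s - 2*int k - 2*int i - 1)))"

lemma Q_unfold:
  "Q m s q = (\<Prod>j=0..s. 1 - q^(2*m-2*j+1)) / ((1 - q)^s * (1 - q^2)^(2*s))
     * (\<Sum>k=0..s. (-1)^(s-k) / (1 - q^(2*m-2*k+1)) * of_int (binom_diff m k) * Q_inner m s k q)"
  unfolding Q_def binom_diff_def Q_inner_def ..

lemma Q_inner_summand:
  fixes q :: "'a::field"
  assumes "k \<le> s" "s \<le> m" "i + j = s - k"
  shows "of_int (ibinom (int m - int s + int i) (int i))
       * (of_int (ibinom (int m - int k - int i) (int s - int k - int i))
            * q powi (2*int s - 2*int k - 2*int i)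
          + of_int (ibinom (int m - int k - int i - 1) (int s - int k - int i - 1))
            * q powi (2*int s - 2*int k - 2*int i - 1))
    = of_nat ((m - s + i choose i) * (m - s + j choose j)) * (q^2)^j
      + (if j = 0 then 0 else q * (of_nat ((m - s + i choose i) * (m - s + (j - 1) choose (j - 1))) * (q^2)^(j - 1)))"
proof -
  have base: "int m - int s + int i = int (m - s + i)" "int m - int k - int i = int (m - s + j)"
    "int s - int k - int i = int j" "2*int s - 2*int k - 2*int i = int (2 * j)"
    using assms by auto
  show ?thesis
  proof (cases j)
    case 0
    \<comment> \<open>the second binomial coefficient has lower index -1\<close>
    then show ?thesis unfolding base ibinom_of_nat by (simp add: power_mult)
  next
    case (Suc j')
    have shifted: "int m - int k - int i - 1 = int (m - s + j')" "int s - int k - int i - 1 = int j'"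
      "2*int s - 2*int k - 2*int i - 1 = int (Suc (2 * j'))"
      using assms Suc by auto
    have "q powi int (2 * j) = q^2 * (q^2)^j'" "q powi int (Suc (2 * j')) = q * (q^2)^j'"
      unfolding power_int_of_nat using Suc by (simp_all add: power_mult power2_eq_square)
    then show ?thesis unfolding shifted unfolding base ibinom_of_nat using Suc
      by (simp add: algebra_simps)
  qed
qed

lemma Q_inner_eq_binom_conv:
  fixes q :: "'a::field"
  assumes "k \<le> s" "s \<le> m"
  shows "Q_inner m s k q
       = binom_conv (q^2) (m - s) (s - k) + (if k < s then q * binom_conv (q^2) (m - s) (s - k - 1) else 0)"
proof -
  define N r where "N = m - s" and "r = s - k"
  define c where "c i j = of_nat ((N + i choose i) * (N + j choose j)) * (q^2)^j" for i j
  have "Q_inner m s k q = (\<Sum>i=0..r. c i (r - i) + (if i < r then q * c i (r - 1 - i) else 0))"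
    unfolding Q_inner_def r_def[symmetric]
  proof (rule sum.cong[OF refl])
    fix i assume "i \<in> {0..r}"
    then show "of_int (ibinom (int m - int s + int i) (int i))
       * (of_int (ibinom (int m - int k - int i) (int s - int k - int i))
            * q powi (2*int s - 2*int k - 2*int i)
          + of_int (ibinom (int m - int k - int i - 1) (int s - int k - int i - 1))
            * q powi (2*int s - 2*int k - 2*int i - 1))
      = c i (r - i) + (if i < r then q * c i (r - 1 - i) else 0)"
      using Q_inner_summand[of k s m i "r - i" q] assms by (auto simp: c_def N_def r_def)
  qed
  also have "\<dots> = binom_conv (q^2) N r + (\<Sum>i<r. q * c i (r - 1 - i))"
  proof -
    have "{0..r} \<inter> {i. i < r} = {..<r}" by auto
    then show ?thesis by (simp add: sum.distrib binom_conv_def c_def sum.If_cases)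
  qed
  also have "(\<Sum>i<r. q * c i (r - 1 - i)) = (if 0 < r then q * binom_conv (q^2) N (r - 1) else 0)"
    by (cases r) (simp_all add: binom_conv_def c_def sum_distrib_left lessThan_Suc_atMost atLeast0AtMost)
  finally show ?thesis using assms by (simp add: N_def r_def)
qed

lemma sum_even_odd_powers:
  fixes y :: "'a::comm_semiring_1"
  shows "(\<Sum>j=0..M. (y^2)^j) + y * (\<Sum>j<M. (y^2)^j) = (\<Sum>i=0..2*M. y^i)"
proof (induction M)
  case (Suc M)
  have "(y^2)^M = y^(2*M)"
    by (simp add: power_mult)
  then have "(\<Sum>i=0..2 * Suc M. y^i) = (\<Sum>i=0..2*M. y^i) + y * (y^2)^M + (y^2)^Suc M"
    by (simp add: mult_ac) (simp add: power2_eq_square mult_ac)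
  moreover have "(\<Sum>j=0..Suc M. (y^2)^j) + y * (\<Sum>j<Suc M. (y^2)^j)
      = ((\<Sum>j=0..M. (y^2)^j) + y * (\<Sum>j<M. (y^2)^j)) + y * (y^2)^M + (y^2)^Suc M"
    by (simp add: algebra_simps)
  ultimately show ?case
    using Suc by simp
qed simp

lemma sum_Q_inner_weighted_geometric:
  fixes t x :: "'a::field"
  assumes "l \<le> m"
  defines "M \<equiv> m - l"
  shows "(\<Sum>s=l..m. Q_inner m s l t * (x^s * (1 - t*x) * ((1 - x) * (1 - t^2*x))^(m-s)))
       = (1 - t*x) * x^l * ((\<Sum>j=0..M. ((t*x)^2)^j) + t * x * (\<Sum>j<M. ((t*x)^2)^j))"
proof -
  define u where "u = (1 - x) * (1 - t^2*x)"
  define a b where "a p = binom_conv (t^2) p (M - p) * x^(M - p) * u^p"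
    and "b p = binom_conv (t^2) p (M - 1 - p) * x^(M - 1 - p) * u^p" for p
  have G: "(\<Sum>p=0..n. binom_conv (t^2) p (n - p) * x^(n - p) * u^p) = (\<Sum>j=0..n. ((t*x)^2)^j)" for n
    using sum_binom_conv_eq_geometric[where q = "t^2" and x = x and M = n]
    by (simp add: u_def power_mult_distrib)
  have B: "(\<Sum>p=0..M. if p < M then b p else 0) = (\<Sum>j<M. ((t*x)^2)^j)"
  proof -
    have "(\<Sum>p=0..M. if p < M then b p else 0) = (\<Sum>p<M. b p)"
      by (rule sum.mono_neutral_cong_right) auto
    also have "\<dots> = (\<Sum>j<M. ((t*x)^2)^j)"
      by (cases M) (simp_all add: b_def G lessThan_Suc_atMost flip: atLeast0AtMost)
    finally show ?thesis .
  qed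
  have summand: "Q_inner m (m - p) l t * (x^(m - p) * (1 - t*x) * u^(m - (m - p)))
      = (1 - t*x) * x^l * (a p + t * x * (if p < M then b p else 0))"
    if "p \<le> M" for p
  proof -
    have "x^(m - p) = x^l * x^(M - p)" "m - (m - p) = p" "m - (m - p) - p = 0"
      using that assms by (simp_all add: M_def flip: power_add)
    moreover have "x^(M - p) = x * x^(M - 1 - p)" if "p < M"
    proof -
      have "M - p = Suc (M - 1 - p)" using that by simp
      then show ?thesis by simp
    qed
    ultimately show ?thesis
      using that assms Q_inner_eq_binom_conv[of l "m - p" m t]
      by (auto simp: M_def a_def b_def algebra_simps)
  qed
  have "(\<Sum>s=l..m. Q_inner m s l t * (x^s * (1 - t*x) * u^(m-s)))
      = (\<Sum>p=0..M. Q_inner m (m - p) l t * (x^(m - p) * (1 - t*x) * u^(m - (m - p))))"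
    unfolding M_def using assms
    by (intro sum.reindex_bij_witness[of _ "\<lambda>p. m - p" "\<lambda>s. m - s"]) auto
  also have "\<dots> = (1 - t*x) * x^l * ((\<Sum>p=0..M. a p) + t * x * (\<Sum>p=0..M. if p < M then b p else 0))"
    by (simp add: summand sum.distrib sum_distrib_left distrib_left)
  finally show ?thesis
    unfolding B a_def G by (simp add: u_def)
qed

lemma sum_Q_inner_weighted:
  fixes t x :: "'a::field"
  assumes "l \<le> m"
  shows "(\<Sum>s=l..m. Q_inner m s l t * (x^s * (1 - t*x) * ((1 - x) * (1 - t^2*x))^(m-s)))
       = x^l - t^(2*m-2*l+1) * x^(2*m+1-l)"
proof -
  define M where "M = m - l"
  have "(1 - t*x) * (\<Sum>i=0..2*M. (t*x)^i) = 1 - (t*x)^Suc (2*M)"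
    by (simp only: atLeast0AtMost sum_gp_basic)
  moreover have "2*m-2*l+1 = Suc (2*M)" "2*m+1-l = l + Suc (2*M)"
    using assms by (simp_all add: M_def)
  ultimately show ?thesis
    unfolding sum_Q_inner_weighted_geometric[OF assms] M_def[symmetric] sum_even_odd_powers
    by (simp only: mult.assoc mult.left_commute[of _ "x^l"]) (simp add: power_add algebra_simps)
qed

section \<open>A palindromic polynomial\<close>

lemma sum_signed_binomial:
  fixes y :: "'a::comm_ring_1"
  assumes "n \<le> N"
  shows "(\<Sum>j=0..N. of_int ((-1)^j * ibinom (int n) (int j)) * y^j) = (1 - y)^n"
proof -
  have "(1 - y)^n = (\<Sum>j\<le>n. of_nat (n choose j) * (-y)^j)"
    using binomial_ring[of "-y" 1 n] by simp
  also have "\<dots> = (\<Sum>j=0..N. of_int ((-1)^j * ibinom (int n) (int j)) * y^j)"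
  proof (rule sum.mono_neutral_cong_left)
    show "\<forall>j\<in>{0..N} - {..n}. of_int ((-1)^j * ibinom (int n) (int j)) * y^j = 0"
      by (auto simp: binomial_eq_0)
  qed (use assms in \<open>auto simp: power_minus[of y]\<close>)
  finally show ?thesis ..
qed

lemma sum_binom_diff_power:
  fixes y :: "'a::comm_ring_1"
  assumes "m \<ge> 1"
  shows "(\<Sum>j=0..2*m+1. of_int ((-1)^j * binom_diff m j) * y^j) = (1 - y^2) * (1 - y)^(2*m-1)"
proof -
  define n where "n = 2*m - 1"
  have n: "2 * int m - 1 = int n" "2*m + 1 = n + 2"
    using assms by (auto simp: n_def)
  define f where "f j = of_int ((-1)^j * ibinom (int n) (int j - 2)) * y^j" for j
  have "(\<Sum>j=0..n+2. f j) = (\<Sum>j=2..n+2. f j)"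
    by (rule sum.mono_neutral_right) (auto simp: f_def)
  also have "\<dots> = (\<Sum>j=0..n. f (j + 2))"
    using sum.shift_bounds_cl_nat_ivl[of f 0 2 n] by (simp only: add_0)
  also have "\<dots> = y^2 * (\<Sum>j=0..n. of_int ((-1)^j * ibinom (int n) (int j)) * y^j)"
    by (simp add: f_def sum_distrib_left power_add power2_eq_square mult_ac)
  also have "\<dots> = y^2 * (1 - y)^n"
    by (simp only: sum_signed_binomial[OF order_refl])
  finally have shifted: "(\<Sum>j=0..n+2. f j) = y^2 * (1 - y)^n" .
  have "(\<Sum>j=0..2*m+1. of_int ((-1)^j * binom_diff m j) * y^j)
      = (\<Sum>j=0..n+2. of_int ((-1)^j * ibinom (int n) (int j)) * y^j) - (\<Sum>j=0..n+2. f j)"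
    unfolding n binom_diff_def f_def by (simp add: algebra_simps sum_subtractf)
  also have "\<dots> = (1 - y)^n - y^2 * (1 - y)^n"
    unfolding shifted by (simp only: sum_signed_binomial[of n "n + 2"] le_add1)
  finally show ?thesis
    by (simp add: n_def algebra_simps)
qed

lemma binom_diff_reflect:
  assumes "m \<ge> 1" "l \<le> m"
  shows "(-1)^(2*m+1-l) * binom_diff m (2*m+1-l) = (-1)^l * binom_diff m l"
proof -
  define n where "n = 2*m - 1"
  have n: "2 * int m - 1 = int n" "l \<le> n"
    using assms by (auto simp: n_def)
  have "ibinom (int n) (int (2*m+1-l) - 2) = ibinom (int n) (int l)"
  proof -
    have e: "int (2*m+1-l) - 2 = int (n - l)" using assms by (simp add: n_def)
    show ?thesis unfolding e ibinom_of_nat using n(2) by (simp add: binomial_symmetric[symmetric])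
  qed
  moreover have "ibinom (int n) (int (2*m+1-l)) = ibinom (int n) (int l - 2)"
  proof (cases "l \<ge> 2")
    case True
    then have e: "int l - 2 = int (l - 2)" "2*m+1-l = n - (l - 2)" and "l - 2 \<le> n"
      using assms by (auto simp: n_def)
    then show ?thesis unfolding e ibinom_of_nat by (simp add: binomial_symmetric[symmetric])
  next
    case False
    then have "n < 2*m+1-l" using assms by (simp add: n_def)
    then show ?thesis unfolding ibinom_of_nat using False by (simp add: binomial_eq_0)
  qed
  moreover have "(-1::int)^(2*m+1-l) = - ((-1)^l)"
  proof -
    have "2*m+1-l = Suc (2*(m-l)) + l" using assms by simp
    then show ?thesis by (simp add: power_add power_mult)
  qed
  ultimately show ?thesis
    unfolding binom_diff_def n(1) by (simp add: algebra_simps)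
qed

lemma binom_diff_palindromic:
  fixes y :: "'a::comm_ring_1"
  assumes m: "m \<ge> 1"
  shows "(1 - y^2) * (1 - y)^(2*m-1) = (\<Sum>l=0..m. of_int ((-1)^l * binom_diff m l) * (y^l + y^(2*m+1-l)))"
proof -
  define c where "c j = of_int ((-1)^j * binom_diff m j) * y^j" for j
  have "(1 - y^2) * (1 - y)^(2*m-1) = (\<Sum>j=0..m + (m+1). c j)"
    using sum_binom_diff_power[OF m, of y] unfolding c_def by (simp add: mult_2)
  also have "\<dots> = (\<Sum>j=0..m. c j) + (\<Sum>j=m+1..m + (m+1). c j)"
    by (rule sum.ub_add_nat) simp
  also have "(\<Sum>j=m+1..m + (m+1). c j) = (\<Sum>l=0..m. c (2*m+1-l))"
    by (rule sum.reindex_bij_witness[of _ "\<lambda>l. 2*m+1-l" "\<lambda>j. 2*m+1-j"]) auto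
  also have "\<dots> = (\<Sum>l=0..m. of_int ((-1)^l * binom_diff m l) * y^(2*m+1-l))"
    unfolding c_def using binom_diff_reflect[OF m] by (intro sum.cong refl) simp
  finally show ?thesis
    unfolding c_def by (simp add: sum.distrib algebra_simps)
qed

lemma sum_signed_binom_diff:
  assumes "m \<ge> 1"
  shows "(\<Sum>l=0..m. (-1)^l * binom_diff m l) = 0"
  using binom_diff_palindromic[OF assms, where y = "1::int"] assms
  by (simp add: sum_distrib_right[symmetric])

section \<open>The identity at a point of infinite multiplicative order\<close>

lemma S_0 [simp]: "S m 0 t = 0"
  by (simp add: S_def)

lemma S_Suc:
  "S m (Suc n) t = t^(m+1) * S m n t
     + (1 - t^(4 * Suc n)) / (1 - t^4) * ((1 - t^(2 * Suc n)) / (1 - t^2))^(m-1)"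
proof -
  have "t^((m+1) * (Suc n - k)) = t^(m+1) * t^((m+1) * (n - k))" if "k \<le> n" for k
    using that by (simp add: Suc_diff_le flip: power_add)
  then show ?thesis
    by (simp add: S_def sum_distrib_left mult_ac)
qed

lemma sum_triangle_swap:
  "(\<Sum>k=0..m. \<Sum>l=0..k. g l k) = (\<Sum>l=0..(m::nat). \<Sum>k=l..m. g l k)"
proof -
  have "(\<Sum>k=0..m. \<Sum>l\<in>{l. l \<in> {0..m} \<and> l \<le> k}. g l k) = (\<Sum>l=0..m. \<Sum>k\<in>{k. k \<in> {0..m} \<and> l \<le> k}. g l k)"
    by (rule sum.swap_restrict) simp_all
  moreover have "{l. l \<in> {0..m} \<and> l \<le> k} = {0..k}" if "k \<le> m" for k
    using that by auto
  moreover have "{k. k \<in> {0..m} \<and> l \<le> k} = {l..m}" for l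
    by auto
  ultimately show ?thesis
    by simp
qed

definition qint :: "'a::comm_ring_1 \<Rightarrow> nat \<Rightarrow> 'a" where
  "qint q a = (\<Sum>i<a. q^i)"

lemma one_minus_power_eq_qint: "1 - q^a = (1 - q) * qint q a"
  unfolding qint_def by (rule one_diff_power_eq)

locale unit_of_infinite_order =
  fixes t :: "'a::field"
  assumes nonzero: "t \<noteq> 0"
    and power_ne_one: "\<And>j. j > 0 \<Longrightarrow> t^j \<noteq> 1"
begin

lemma one_minus_power_ne_0: "j > 0 \<Longrightarrow> 1 - t^j \<noteq> 0"
  using power_ne_one by simp

definition S_weight :: "nat \<Rightarrow> nat \<Rightarrow> 'a" where
  "S_weight m l = (-1)^l * of_int (binom_diff m l)
     / ((1 - t^(2*m-2*l+1)) * ((1 - t^4) * (1 - t^2)^(2*m-1)))"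

definition S_closed :: "nat \<Rightarrow> 'a \<Rightarrow> 'a" where
  "S_closed m x = (\<Sum>l=0..m. S_weight m l * (x^l - t^(2*m-2*l+1) * x^(2*m+1-l)))"

lemma S_weight_step:
  fixes x :: 'a
  assumes "l \<le> m"
  defines "y \<equiv> t^2 * x"
  shows "S_weight m l * ((y^l - t^(2*m-2*l+1) * y^(2*m+1-l)) - t^(2*m+1) * (x^l - t^(2*m-2*l+1) * x^(2*m+1-l)))
       = of_int ((-1)^l * binom_diff m l) * (y^l + y^(2*m+1-l)) / ((1 - t^4) * (1 - t^2)^(2*m-1))"
proof -
  define A D where "A = t^(2*m-2*l+1)" and "D = (1 - t^4) * (1 - t^2)^(2*m-1)"
  have "2*m+1 = 2*l + (2*m-2*l+1)" "2*(2*m+1-l) = 2*l + (2*m-2*l+1) + (2*m-2*l+1)"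
    using assms(1) by simp_all
  then have "t^(2*m+1) = t^(2*l) * A" "t^(2*l) * A * A = t^(2*(2*m+1-l))"
    unfolding A_def by (metis power_add)+
  moreover have "y^l = t^(2*l) * x^l" "y^(2*m+1-l) = t^(2*(2*m+1-l)) * x^(2*m+1-l)"
    by (simp_all add: y_def power_mult_distrib power_mult)
  ultimately have "(y^l - A * y^(2*m+1-l)) - t^(2*m+1) * (x^l - A * x^(2*m+1-l))
      = (1 - A) * (y^l + y^(2*m+1-l))"
    by (simp add: algebra_simps)
  moreover have "1 - A \<noteq> 0" "D \<noteq> 0"
    unfolding A_def D_def using one_minus_power_ne_0[of "2*m-2*l+1"] one_minus_power_ne_0[of 4]
      one_minus_power_ne_0[of 2] by simp_all
  moreover have "S_weight m l = (-1)^l * of_int (binom_diff m l) / ((1 - A) * D)"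
    by (simp add: S_weight_def A_def D_def)
  ultimately show ?thesis
    unfolding A_def[symmetric] D_def[symmetric] by simp
qed

lemma S_closed_step:
  assumes "m \<ge> 1"
  shows "S_closed m (t^2 * x) - t^(2*m+1) * S_closed m x
       = (1 - (t^2 * x)^2) / (1 - t^4) * ((1 - t^2 * x) / (1 - t^2))^(2*m-1)"
proof -
  have "S_closed m (t^2 * x) - t^(2*m+1) * S_closed m x
      = (\<Sum>l=0..m. of_int ((-1)^l * binom_diff m l) * ((t^2 * x)^l + (t^2 * x)^(2*m+1-l))
          / ((1 - t^4) * (1 - t^2)^(2*m-1)))"
    unfolding S_closed_def sum_distrib_left sum_subtractf[symmetric]
    by (intro sum.cong refl, subst S_weight_step[symmetric]) (simp_all add: algebra_simps)
  also have "\<dots> = (1 - (t^2 * x)^2) * (1 - t^2 * x)^(2*m-1) / ((1 - t^4) * (1 - t^2)^(2*m-1))"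
    unfolding binom_diff_palindromic[OF assms] by (simp add: sum_divide_distrib)
  finally show ?thesis
    by (simp add: power_divide)
qed

lemma S_closed_1:
  assumes "m \<ge> 1"
  shows "S_closed m 1 = 0"
proof -
  have "S_closed m 1 = (\<Sum>l=0..m. of_int ((-1)^l * binom_diff m l)) / ((1 - t^4) * (1 - t^2)^(2*m-1))"
    unfolding S_closed_def sum_divide_distrib
  proof (intro sum.cong refl)
    fix l
    have "1 - t^(2*m-2*l+1) \<noteq> 0" "1 - t^4 \<noteq> 0" "1 - t^2 \<noteq> 0"
      using one_minus_power_ne_0[of "2*m-2*l+1"] one_minus_power_ne_0[of 4]
        one_minus_power_ne_0[of 2] by simp_all
    then show "S_weight m l * (1^l - t^(2*m-2*l+1) * 1^(2*m+1-l))
        = of_int ((-1)^l * binom_diff m l) / ((1 - t^4) * (1 - t^2)^(2*m-1))"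
      by (simp add: S_weight_def)
  qed
  also have "(\<Sum>l=0..m. of_int ((-1)^l * binom_diff m l)) = (of_int (\<Sum>l=0..m. (-1)^l * binom_diff m l) :: 'a)"
    by (rule of_int_sum[symmetric])
  finally show ?thesis
    by (simp only: sum_signed_binom_diff[OF assms]) simp
qed

lemma S_eq_S_closed:
  assumes "m \<ge> 1"
  shows "S (2*m) n t = S_closed m (t^(2*n))"
proof (induction n)
  case 0
  then show ?case using S_closed_1[OF assms] by simp
next
  case (Suc n)
  have e: "t^(2 * Suc n) = t^2 * t^(2*n)"
    by (simp flip: power_add)
  have "4 * Suc n = 2 * Suc n * 2"
    by simp
  then have e4: "t^(4 * Suc n) = (t^2 * t^(2*n))^2"
    by (metis e power_mult)
  have "S (2*m) (Suc n) t = t^(2*m+1) * S_closed m (t^(2*n))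
      + (1 - (t^2 * t^(2*n))^2) / (1 - t^4) * ((1 - t^2 * t^(2*n)) / (1 - t^2))^(2*m-1)"
    unfolding S_Suc Suc e e4 by simp
  also have "\<dots> = S_closed m (t^2 * t^(2*n))"
    by (subst S_closed_step[OF assms, symmetric]) simp
  finally show ?case
    unfolding e .
qed

definition Q_core :: "nat \<Rightarrow> nat \<Rightarrow> 'a" where
  "Q_core m k = (\<Sum>l=0..k. S_weight m l * Q_inner m k l t)"

lemma Q_eq_Q_core:
  "Q m k t = (-1)^k * ((\<Prod>j=0..k. 1 - t^(2*m-2*j+1)) * ((1 - t^4) * (1 - t^2)^(2*m-1))
                / ((1 - t)^k * (1 - t^2)^(2*k))) * Q_core m k"
proof -
  define D where "D = (1 - t^4) * (1 - t^2)^(2*m-1)"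
  have "D \<noteq> 0"
    unfolding D_def using one_minus_power_ne_0[of 4] one_minus_power_ne_0[of 2] by simp
  have "(-1)^(k-l) / (1 - t^(2*m-2*l+1)) * of_int (binom_diff m l) * Q_inner m k l t
      = (-1)^k * D * (S_weight m l * Q_inner m k l t)" if "l \<le> k" for l
  proof -
    have "(-1::'a)^(k-l) = (-1)^k * (-1)^l"
      using that by (simp add: power_diff_conv_inverse)
    moreover have "S_weight m l = (-1)^l * of_int (binom_diff m l) / ((1 - t^(2*m-2*l+1)) * D)"
      by (simp add: S_weight_def D_def)
    ultimately show ?thesis
      using \<open>D \<noteq> 0\<close> by (simp add: mult_ac)
  qed
  then show ?thesis
    unfolding Q_unfold Q_core_def D_def[symmetric] sum_distrib_left
    by (simp add: mult_ac)
qed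

lemma S_eq_sum_Q_core:
  fixes n :: nat
  assumes "m \<ge> 1"
  defines "x \<equiv> t^(2*n)"
  shows "S (2*m) n t = (\<Sum>k=0..m. Q_core m k * (x^k * (1 - t*x) * ((1 - x) * (1 - t^2*x))^(m-k)))"
proof -
  have "S (2*m) n t = (\<Sum>l=0..m. S_weight m l * (x^l - t^(2*m-2*l+1) * x^(2*m+1-l)))"
    unfolding S_eq_S_closed[OF assms(1)] S_closed_def x_def ..
  also have "\<dots> = (\<Sum>l=0..m. \<Sum>k=l..m.
      S_weight m l * Q_inner m k l t * (x^k * (1 - t*x) * ((1 - x) * (1 - t^2*x))^(m-k)))"
  proof (intro sum.cong refl)
    fix l assume "l \<in> {0..m}"
    then have "l \<le> m" by simp
    show "S_weight m l * (x^l - t^(2*m-2*l+1) * x^(2*m+1-l)) = (\<Sum>k=l..m.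
        S_weight m l * Q_inner m k l t * (x^k * (1 - t*x) * ((1 - x) * (1 - t^2*x))^(m-k)))"
      unfolding sum_Q_inner_weighted[OF \<open>l \<le> m\<close>, symmetric] by (simp add: sum_distrib_left mult.assoc)
  qed
  also have "\<dots> = (\<Sum>k=0..m. Q_core m k * (x^k * (1 - t*x) * ((1 - x) * (1 - t^2*x))^(m-k)))"
    by (simp add: sum_triangle_swap[symmetric] Q_core_def sum_distrib_right)
  finally show ?thesis .
qed

lemma powi_one_minus_square:
  assumes "k \<le> m" "m \<ge> 1"
  shows "(1 - t^2) powi (2*int m - 2*int k - 1) = (1 - t^2)^(2*m-1) / (1 - t^2)^(2*k)"
proof -
  have "1 - t^2 \<noteq> 0" using one_minus_power_ne_0[of 2] by simp
  have e: "2*int m - 2*int k - 1 = int (2*m-1) - int (2*k)" using assms by simp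
  show ?thesis
    unfolding e power_int_diff[OF disjI1, OF \<open>1 - t^2 \<noteq> 0\<close>] power_int_of_nat by simp
qed

lemma summand_eq_Q_core:
  fixes n :: nat
  assumes "k \<le> m" "m \<ge> 1"
  defines "x \<equiv> t^(2*n)"
  shows "(-1)^k * Q m k t
            * ((1 - t^(2*n+1)) * (1 - t^(2*n))^(m-k) * (1 - t^(2*n+2))^(m-k)
               * (1 - t)^k * t^(2*k*n))
            / ((1 - t^4) * (1 - t^2) powi (2*int m - 2*int k - 1)
               * (\<Prod>i=0..k. 1 - t^(2*m-2*i+1)))
       = Q_core m k * (x^k * (1 - t*x) * ((1 - x) * (1 - t^2*x))^(m-k))"
proof -
  define P U V where "P = (\<Prod>j=0..k. 1 - t^(2*m-2*j+1))" and "U = (1 - t)^k"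
    and "V = (1 - t^2)^(2*k)"
  define D where "D = (1 - t^4) * (1 - t^2)^(2*m-1)"
  have "P \<noteq> 0" "U \<noteq> 0" "V \<noteq> 0" "D \<noteq> 0"
    unfolding P_def U_def V_def D_def
    using one_minus_power_ne_0[of 1] one_minus_power_ne_0[of 2] one_minus_power_ne_0[of 4]
      one_minus_power_ne_0[of "2*m-2*_+1"] by auto
  have ex: "t^(2*n+1) = t*x" "t^(2*n+2) = t^2*x" "t^(2*k*n) = x^k"
    by (simp_all add: x_def power_add power2_eq_square mult_ac flip: power_mult)
  define R where "R = x^k * (1 - t*x) * ((1 - x) * (1 - t^2*x))^(m-k)"
  have "(1 - t^(2*n+1)) * (1 - t^(2*n))^(m-k) * (1 - t^(2*n+2))^(m-k) * (1 - t)^k * t^(2*k*n) = U * R"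
    unfolding ex x_def[symmetric] by (simp add: U_def R_def power_mult_distrib mult_ac)
  moreover have "(1 - t^4) * (1 - t^2) powi (2*int m - 2*int k - 1) * (\<Prod>i=0..k. 1 - t^(2*m-2*i+1))
      = D * P / V"
    unfolding powi_one_minus_square[OF assms(1,2)] by (simp add: D_def P_def V_def)
  moreover have "(-1)^k * Q m k t = P * D / (U * V) * Q_core m k"
    by (simp add: Q_eq_Q_core P_def D_def U_def V_def)
  ultimately have "(-1)^k * Q m k t
            * ((1 - t^(2*n+1)) * (1 - t^(2*n))^(m-k) * (1 - t^(2*n+2))^(m-k)
               * (1 - t)^k * t^(2*k*n))
            / ((1 - t^4) * (1 - t^2) powi (2*int m - 2*int k - 1)
               * (\<Prod>i=0..k. 1 - t^(2*m-2*i+1)))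
       = P * D / (U * V) * Q_core m k * (U * R) / (D * P / V)"
    by (simp only:)
  also have "\<dots> = Q_core m k * R"
    using \<open>P \<noteq> 0\<close> \<open>U \<noteq> 0\<close> \<open>V \<noteq> 0\<close> \<open>D \<noteq> 0\<close> by (simp add: field_simps)
  finally show ?thesis
    unfolding R_def .
qed

lemma S_eq_sum_Q:
  assumes "m \<ge> 1"
  shows "S (2*m) n t =
         (\<Sum>k=0..m. (-1)^k * Q m k t
            * ((1 - t^(2*n+1)) * (1 - t^(2*n))^(m-k) * (1 - t^(2*n+2))^(m-k)
               * (1 - t)^k * t^(2*k*n))
            / ((1 - t^4) * (1 - t^2) powi (2*int m - 2*int k - 1)
               * (\<Prod>i=0..k. 1 - t^(2*m-2*i+1))))"
  unfolding S_eq_sum_Q_core[OF assms] using assms by (intro sum.cong refl summand_eq_Q_core[symmetric]) auto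

definition interp_node :: "nat \<Rightarrow> 'a" where
  "interp_node n = qint (t^2) n * qint (t^2) (Suc n) / t^(2*n)"

definition interp_coeff :: "nat \<Rightarrow> nat \<Rightarrow> 'a" where
  "interp_coeff m k = (1 - t) * (1 - t^2)^(2*(m-k)) * Q_core m k"

lemma S_eq_interpolation:
  assumes "m \<ge> 1"
  shows "S (2*m) n t = qint t (2*n+1) * t^(2*n*m) * (\<Sum>k=0..m. interp_coeff m k * interp_node n ^ (m-k))"
proof -
  define x where "x = t^(2*n)"
  have "x \<noteq> 0" using nonzero by (simp add: x_def)
  have x_eq: "x = (t^2)^n"
    by (simp add: x_def power_mult)
  have lin: "1 - t*x = (1 - t) * qint t (2*n+1)"
    unfolding x_def by (simp flip: one_minus_power_eq_qint)
  have quad: "(1 - x) * (1 - t^2*x) = (1 - t^2)^2 * (x * interp_node n)"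
  proof -
    have "1 - x = (1 - t^2) * qint (t^2) n" "1 - t^2*x = (1 - t^2) * qint (t^2) (Suc n)"
      unfolding x_eq by (simp_all flip: one_minus_power_eq_qint)
    moreover have "x * interp_node n = qint (t^2) n * qint (t^2) (Suc n)"
      using \<open>x \<noteq> 0\<close> by (simp add: interp_node_def x_def)
    ultimately show ?thesis
      by (simp add: power2_eq_square mult_ac)
  qed
  have "Q_core m k * (x^k * (1 - t*x) * ((1 - x) * (1 - t^2*x))^(m-k))
      = qint t (2*n+1) * x^m * (interp_coeff m k * interp_node n ^ (m-k))" if "k \<le> m" for k
  proof -
    have "x^k * ((1 - t^2)^2 * (x * interp_node n))^(m-k) = (1 - t^2)^(2*(m-k)) * (x^m * interp_node n^(m-k))"
      using that by (simp add: power_mult_distrib mult_ac flip: power_add power_mult)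
    then show ?thesis
      unfolding lin quad interp_coeff_def by (simp add: mult_ac)
  qed
  then show ?thesis
    unfolding S_eq_sum_Q_core[OF assms] x_def[symmetric] sum_distrib_left
    by (intro sum.cong refl) (simp add: x_def power_mult)
qed

lemma Q_eq_interp_coeff:
  assumes "m \<ge> 1" "k \<le> m"
  shows "Q m k t = (-1)^k * (1 + t^2) * (\<Prod>j=0..k. qint t (2*m-2*j+1)) * interp_coeff m k"
proof -
  define P D U W where "P = (\<Prod>j=0..k. 1 - t^(2*m-2*j+1))" and "D = (1 - t^4) * (1 - t^2)^(2*m-1)"
    and "U = (1 - t)^k" and "W = (1 - t^2)^(2*k)"
  define P' W' where "P' = (\<Prod>j=0..k. qint t (2*m-2*j+1))" and "W' = (1 - t^2)^(2*(m-k))"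
  define a b where "a = 1 - t" and "b = 1 + t^2"
  have "U \<noteq> 0" "W \<noteq> 0"
    using one_minus_power_ne_0[of 1] one_minus_power_ne_0[of 2] by (simp_all add: U_def W_def)
  have "P = a * U * P'"
    unfolding P_def P'_def U_def a_def one_minus_power_eq_qint prod.distrib by simp
  moreover have "D = b * (W * W')"
  proof -
    have "1 - t^4 = (1 + t^2) * (1 - t^2)" by (simp add: algebra_simps flip: power_add)
    moreover have "Suc (2*m-1) = 2*k + 2*(m-k)" using assms by simp
    ultimately show ?thesis
      unfolding D_def W_def W'_def b_def by (simp add: mult_ac flip: power_add power_Suc)
  qed
  ultimately have "Q m k t = (-1)^k * (a * U * P' * (b * (W * W')) / (U * W)) * Q_core m k"
    unfolding P_def D_def U_def W_def by (simp only: Q_eq_Q_core)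
  also have "\<dots> = (-1)^k * b * P' * (a * W' * Q_core m k)"
    using \<open>U \<noteq> 0\<close> \<open>W \<noteq> 0\<close> by (simp add: field_simps)
  finally show ?thesis
    by (simp add: interp_coeff_def a_def b_def P'_def W'_def)
qed

lemma interp_node_diff:
  assumes "j < i"
  shows "interp_node i - interp_node j = qint (t^2) (i-j) * qint (t^2) (i+j+1) / t^(2*i)"
proof -
  define q A B where "q = t^2" and "A = q^j" and "B = q^(i-j)"
  define K where "K = (1 - q) * (1 - q)"
  have "1 - q \<noteq> 0" "A \<noteq> 0" "B \<noteq> 0"
    using nonzero one_minus_power_ne_0[of 2] by (simp_all add: q_def A_def B_def)
  then have "K \<noteq> 0" by (simp add: K_def)
  have qint: "qint q a = (1 - q^a) / (1 - q)" for a
    using one_minus_power_eq_qint[of q a] \<open>1 - q \<noteq> 0\<close> by (simp add: field_simps)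
  have "i = j + (i - j)" "i + j + 1 = Suc (j + (j + (i - j)))"
    using assms by simp_all
  then have "q^i = A * B" "q^(i+j+1) = q * A * A * B"
    unfolding A_def B_def by (metis power_add, metis power_add power_Suc mult.assoc)
  moreover have "t^(2*n) = q^n" for n
    by (simp add: q_def power_mult)
  ultimately have pow: "q^i = A * B" "q^Suc i = q * A * B" "q^Suc j = q * A" "q^(i+j+1) = q * A * A * B"
    "t^(2*i) = A * B" "t^(2*j) = A"
    by (simp_all add: A_def mult_ac)
  have frac: "y / (K * (A * B)) - z / (K * A) = (y - B * z) / (K * (A * B))" for y z
    using \<open>K \<noteq> 0\<close> \<open>A \<noteq> 0\<close> \<open>B \<noteq> 0\<close> by (simp add: field_simps)
  have "interp_node i - interp_node j = (1 - A*B) * (1 - q*A*B) / (K * (A*B)) - (1 - A) * (1 - q*A) / (K * A)"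
    unfolding interp_node_def q_def[symmetric] qint pow A_def[symmetric] by (simp add: K_def)
  also have "\<dots> = ((1 - A*B) * (1 - q*A*B) - B * ((1 - A) * (1 - q*A))) / (K * (A*B))"
    by (rule frac)
  also have "(1 - A*B) * (1 - q*A*B) - B * ((1 - A) * (1 - q*A)) = (1 - B) * (1 - q*A*A*B)"
    by (simp add: algebra_simps)
  also have "(1 - B) * (1 - q*A*A*B) / (K * (A*B)) = qint (t^2) (i-j) * qint (t^2) (i+j+1) / t^(2*i)"
    unfolding q_def[symmetric] qint pow by (simp add: B_def K_def)
  finally show ?thesis .
qed

end

section \<open>Rational functions without poles at 1 and -1\<close>

lemma coeff_closed_by_interpolation:
  fixes p :: "'a::field poly" and x :: "nat \<Rightarrow> 'a" and R :: "'a \<Rightarrow> bool"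
  assumes add: "\<And>a b. R a \<Longrightarrow> R b \<Longrightarrow> R (a + b)"
    and mult: "\<And>a b. R a \<Longrightarrow> R b \<Longrightarrow> R (a * b)"
    and uminus: "\<And>a. R a \<Longrightarrow> R (- a)"
    and zero: "R 0"
  shows "degree p \<le> M \<Longrightarrow> (\<And>j. j \<le> M \<Longrightarrow> R (x j))
    \<Longrightarrow> (\<And>i j. j < i \<Longrightarrow> i \<le> M \<Longrightarrow> x i \<noteq> x j \<and> R (inverse (x i - x j)))
    \<Longrightarrow> (\<And>j. j \<le> M \<Longrightarrow> R (poly p (x j))) \<Longrightarrow> R (coeff p i)"
proof (induction M arbitrary: p x i)
  case 0
  then have "p = [:coeff p 0:]"
    by (metis degree_0_id le_zero_eq)
  then have "coeff p i = (if i = 0 then poly p (x 0) else 0)"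
    by (metis coeff_pCons_Suc not0_implies_Suc poly_pCons poly_0 coeff_0
        mult_zero_right add.right_neutral)
  then show ?case
    using "0.prems"(4)[of 0] zero by simp
next
  case (Suc M)
  \<comment> \<open>the quotient by \<open>z - x 0\<close> takes the divided differences as values at the other nodes\<close>
  define c q where "c = x 0" and "q = synthetic_div p c"
  have p_eq: "p = [:-c, 1:] * q + [:poly p c:]"
    unfolding q_def using synthetic_div_correct'[of c p] by simp
  have pv: "poly p y = (y - c) * poly q y + poly p c" for y
    by (subst p_eq) (simp add: algebra_simps)
  have "R (poly p c)" "R c"
    using Suc.prems(2,4)[of 0] by (simp_all add: c_def)
  have "R (poly q (x (Suc j)))" if "j \<le> M" for j
  proof -
    have "x (Suc j) \<noteq> c" "R (inverse (x (Suc j) - c))"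
      using Suc.prems(3)[of 0 "Suc j"] that by (simp_all add: c_def)
    then have "poly q (x (Suc j)) = (poly p (x (Suc j)) + - poly p c) * inverse (x (Suc j) - c)"
      using pv[of "x (Suc j)"] by (simp add: field_simps)
    moreover have "R (poly p (x (Suc j)))"
      using Suc.prems(4)[of "Suc j"] that by simp
    ultimately show ?thesis
      using \<open>R (poly p c)\<close> \<open>R (inverse (x (Suc j) - c))\<close> by (metis add mult uminus)
  qed
  moreover have "degree q \<le> M"
    using Suc.prems(1) by (simp add: q_def degree_synthetic_div)
  ultimately have R_q: "R (coeff q i')" for i'
    using Suc.prems(2,3) by (intro Suc.IH[of q "\<lambda>j. x (Suc j)"]) auto
  have "coeff p i = coeff (pCons 0 q) i + - c * coeff q i + coeff [:poly p c:] i"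
    by (subst p_eq) (cases i, simp_all add: algebra_simps coeff_pCons)
  moreover have "R (coeff (pCons 0 q) i)" "R (coeff [:poly p c:] i)"
    using R_q \<open>R (poly p c)\<close> zero by (cases i; simp add: coeff_pCons)+
  ultimately show ?case
    using R_q \<open>R c\<close> by (metis add mult uminus)
qed

lemma linear_power_cancel:
  fixes a b p :: "'a::idom poly"
  assumes "a * [:-c, 1:]^e = p * b" and "poly b c \<noteq> 0"
  obtains p' where "p = [:-c, 1:]^e * p'" and "a = p' * b"
proof -
  have "[:-c, 1:]^e dvd p"
  proof (cases "p = 0")
    case False
    with assms have "a \<noteq> 0" "b \<noteq> 0" by auto
    then have "e \<le> order c (a * [:-c, 1:]^e)"
      by (simp add: order_mult order_power_n_n)
    also have "\<dots> = order c p"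
      using assms \<open>p \<noteq> 0\<close> \<open>b \<noteq> 0\<close> by (simp add: order_mult order_0I)
    finally show ?thesis by (simp add: order_divides)
  qed simp
  then obtain p' where p: "p = [:-c, 1:]^e * p'" ..
  with assms(1) have "a = p' * b"
    by (simp add: mult_ac)
  with p show ?thesis by (rule that)
qed

lemma to_fract_power [simp]: "to_fract (x^n) = to_fract x ^ n"
  by (induction n) simp_all

lemma to_fract_of_nat [simp]: "to_fract (of_nat n) = of_nat n"
  by (induction n) simp_all

lemma to_fract_of_int [simp]: "to_fract (of_int k) = of_int k"
  by (cases k rule: int_cases) (simp_all del: of_nat_Suc)

definition is_int_poly :: "int poly fract \<Rightarrow> bool" where
  "is_int_poly z \<longleftrightarrow> (\<exists>p. z = to_fract p)"

definition nonzero_at_pm1 :: "int poly \<Rightarrow> bool" where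
  "nonzero_at_pm1 p \<longleftrightarrow> poly p 1 \<noteq> 0 \<and> poly p (-1) \<noteq> 0"

definition defined_at_pm1 :: "int poly fract \<Rightarrow> bool" where
  "defined_at_pm1 z \<longleftrightarrow> (\<exists>a b. nonzero_at_pm1 b \<and> z = to_fract a / to_fract b)"

definition unit_at_pm1 :: "int poly fract \<Rightarrow> bool" where
  "unit_at_pm1 z \<longleftrightarrow> (\<exists>a b. nonzero_at_pm1 a \<and> nonzero_at_pm1 b \<and> z = to_fract a / to_fract b)"

lemma nonzero_at_pm1_mult: "nonzero_at_pm1 a \<Longrightarrow> nonzero_at_pm1 b \<Longrightarrow> nonzero_at_pm1 (a * b)"
  by (simp add: nonzero_at_pm1_def)

lemma nonzero_at_pm1_nonzero: "nonzero_at_pm1 b \<Longrightarrow> to_fract b \<noteq> 0"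
  by (auto simp: nonzero_at_pm1_def)

lemma is_int_poly_of_int [intro]: "is_int_poly (of_int k)"
  unfolding is_int_poly_def by (metis to_fract_of_int)

lemma is_int_poly_of_nat [intro]: "is_int_poly (of_nat n)"
  using is_int_poly_of_int[of "int n"] by simp

lemma is_int_poly_0 [intro]: "is_int_poly 0"
  and is_int_poly_1 [intro]: "is_int_poly 1"
  using is_int_poly_of_int[of 0] is_int_poly_of_int[of 1] by simp_all

lemma is_int_poly_add [intro]: "is_int_poly x \<Longrightarrow> is_int_poly y \<Longrightarrow> is_int_poly (x + y)"
  unfolding is_int_poly_def by (metis to_fract_add)

lemma is_int_poly_diff [intro]: "is_int_poly x \<Longrightarrow> is_int_poly y \<Longrightarrow> is_int_poly (x - y)"
  unfolding is_int_poly_def by (metis to_fract_diff)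

lemma is_int_poly_mult [intro]: "is_int_poly x \<Longrightarrow> is_int_poly y \<Longrightarrow> is_int_poly (x * y)"
  unfolding is_int_poly_def by (metis to_fract_mult)

lemma is_int_poly_uminus [intro]: "is_int_poly x \<Longrightarrow> is_int_poly (- x)"
  unfolding is_int_poly_def by (metis to_fract_uminus)

lemma is_int_poly_power [intro]: "is_int_poly x \<Longrightarrow> is_int_poly (x^n)"
  unfolding is_int_poly_def by (metis to_fract_power)

lemma is_int_poly_sum [intro]: "(\<And>i. i \<in> A \<Longrightarrow> is_int_poly (f i)) \<Longrightarrow> is_int_poly (sum f A)"
  by (induction A rule: infinite_finite_induct) auto

lemma is_int_poly_prod [intro]: "(\<And>i. i \<in> A \<Longrightarrow> is_int_poly (f i)) \<Longrightarrow> is_int_poly (prod f A)"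
  by (induction A rule: infinite_finite_induct) auto

lemma defined_at_pm1_add [intro]: "defined_at_pm1 x \<Longrightarrow> defined_at_pm1 y \<Longrightarrow> defined_at_pm1 (x + y)"
proof -
  assume "defined_at_pm1 x" "defined_at_pm1 y"
  then obtain a b c d where "nonzero_at_pm1 b" "x = to_fract a / to_fract b"
    and "nonzero_at_pm1 d" "y = to_fract c / to_fract d"
    unfolding defined_at_pm1_def by blast
  moreover from this have "x + y = to_fract (a * d + c * b) / to_fract (b * d)"
    using nonzero_at_pm1_nonzero[of b] nonzero_at_pm1_nonzero[of d] by (simp add: field_simps)
  ultimately show ?thesis
    unfolding defined_at_pm1_def by (blast intro: nonzero_at_pm1_mult)
qed

lemma defined_at_pm1_mult [intro]: "defined_at_pm1 x \<Longrightarrow> defined_at_pm1 y \<Longrightarrow> defined_at_pm1 (x * y)"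
proof -
  assume "defined_at_pm1 x" "defined_at_pm1 y"
  then obtain a b c d where "nonzero_at_pm1 b" "x = to_fract a / to_fract b"
    and "nonzero_at_pm1 d" "y = to_fract c / to_fract d"
    unfolding defined_at_pm1_def by blast
  moreover from this have "x * y = to_fract (a * c) / to_fract (b * d)"
    by simp
  ultimately show ?thesis
    unfolding defined_at_pm1_def by (blast intro: nonzero_at_pm1_mult)
qed

lemma defined_at_pm1_uminus [intro]: "defined_at_pm1 x \<Longrightarrow> defined_at_pm1 (- x)"
  unfolding defined_at_pm1_def by (metis minus_divide_left to_fract_uminus)

lemma defined_at_pm1_if_is_int_poly [intro]: "is_int_poly x \<Longrightarrow> defined_at_pm1 x"
  unfolding is_int_poly_def defined_at_pm1_def nonzero_at_pm1_def
  by (metis div_by_1 one_neq_zero poly_1 to_fract_1)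

lemma defined_at_pm1_inverse [intro]: "unit_at_pm1 x \<Longrightarrow> defined_at_pm1 (inverse x)"
  unfolding unit_at_pm1_def defined_at_pm1_def by (metis inverse_divide)

lemma unit_at_pm1_nonzero: "unit_at_pm1 x \<Longrightarrow> x \<noteq> 0"
  unfolding unit_at_pm1_def nonzero_at_pm1_def by auto

lemma unit_at_pm1_to_fract: "nonzero_at_pm1 p \<Longrightarrow> unit_at_pm1 (to_fract p)"
  unfolding unit_at_pm1_def by (rule exI[of _ p], rule exI[of _ 1]) (simp add: nonzero_at_pm1_def)

lemma unit_at_pm1_1 [intro]: "unit_at_pm1 1"
  using unit_at_pm1_to_fract[of 1] by (simp add: nonzero_at_pm1_def)

lemma unit_at_pm1_mult [intro]: "unit_at_pm1 x \<Longrightarrow> unit_at_pm1 y \<Longrightarrow> unit_at_pm1 (x * y)"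
proof -
  assume "unit_at_pm1 x" "unit_at_pm1 y"
  then obtain a b c d where "nonzero_at_pm1 a" "nonzero_at_pm1 b" "x = to_fract a / to_fract b"
    and "nonzero_at_pm1 c" "nonzero_at_pm1 d" "y = to_fract c / to_fract d"
    unfolding unit_at_pm1_def by blast
  moreover from this have "x * y = to_fract (a * c) / to_fract (b * d)"
    by simp
  ultimately show ?thesis
    unfolding unit_at_pm1_def by (blast intro: nonzero_at_pm1_mult)
qed

lemma unit_at_pm1_inverse [intro]: "unit_at_pm1 x \<Longrightarrow> unit_at_pm1 (inverse x)"
  unfolding unit_at_pm1_def by (metis inverse_divide)

lemma unit_at_pm1_divide [intro]: "unit_at_pm1 x \<Longrightarrow> unit_at_pm1 y \<Longrightarrow> unit_at_pm1 (x / y)"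
  unfolding divide_inverse by blast

lemma unit_at_pm1_power [intro]: "unit_at_pm1 x \<Longrightarrow> unit_at_pm1 (x^n)"
  by (induction n) auto

lemma unit_at_pm1_prod [intro]: "(\<And>i. i \<in> A \<Longrightarrow> unit_at_pm1 (f i)) \<Longrightarrow> unit_at_pm1 (prod f A)"
  by (induction A rule: infinite_finite_induct) auto

lemma is_int_poly_if_defined_at_pm1:
  assumes "defined_at_pm1 z" and "is_int_poly (z * to_fract ([:-1, 1:]^e1 * [:1, 1:]^e2))"
  shows "is_int_poly z"
proof -
  obtain a b where b: "nonzero_at_pm1 b" and z: "z = to_fract a / to_fract b"
    using assms(1) unfolding defined_at_pm1_def by blast
  obtain p where "z * to_fract ([:-1, 1:]^e1 * [:1, 1:]^e2) = to_fract p"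
    using assms(2) unfolding is_int_poly_def by blast
  then have "(a * [:1, 1:]^e2) * [:-1, 1:]^e1 = p * b"
    using nonzero_at_pm1_nonzero[OF b] unfolding z by (simp add: field_simps flip: to_fract_mult to_fract_power)
  then obtain p1 where "p = [:-1, 1:]^e1 * p1" "a * [:- (-1), 1:]^e2 = p1 * b"
    using b unfolding nonzero_at_pm1_def by (auto elim: linear_power_cancel)
  then obtain p2 where "a = p2 * b"
    using b linear_power_cancel[of a "-1" e2 p1 b] unfolding nonzero_at_pm1_def by auto
  then show ?thesis
    using nonzero_at_pm1_nonzero[OF b] unfolding z is_int_poly_def by auto
qed

section \<open>Specialisation to the indeterminate\<close>

lemma X_eq_to_fract: "X = to_fract [:0, 1:]"
  by (simp add: X_def to_fract_def)

lemma X_power_ne_1: "j > 0 \<Longrightarrow> X^j \<noteq> 1"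
proof
  assume "j > 0" "X^j = 1"
  then have "monom (1::int) j = 1"
    by (simp add: X_eq_to_fract monom_altdef flip: to_fract_1 to_fract_power)
  with \<open>j > 0\<close> show False
    by (simp add: monom_eq_1_iff)
qed

interpretation X: unit_of_infinite_order X
  by unfold_locales (simp add: X_eq_to_fract, rule X_power_ne_1)

lemma is_int_poly_X [intro]: "is_int_poly X"
  unfolding is_int_poly_def X_eq_to_fract by blast

lemma unit_at_pm1_X [intro]: "unit_at_pm1 X"
  unfolding X_eq_to_fract by (rule unit_at_pm1_to_fract) (simp add: nonzero_at_pm1_def)

lemma qint_X_eq_to_fract: "qint X a = to_fract (\<Sum>i<a. [:0, 1:]^i)"
  by (simp add: qint_def X_eq_to_fract)

lemma qint_X2_eq_to_fract: "qint (X^2) a = to_fract (\<Sum>i<a. [:0, 1:]^(2*i))"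
  by (simp add: qint_def X_eq_to_fract power_mult)

lemma sum_neg_one_power_odd: "odd a \<Longrightarrow> (\<Sum>i<a. (-1::int)^i) = 1"
proof (induction a rule: nat_less_induct)
  case (1 a)
  show ?case
  proof (cases "a = 1")
    case False
    with \<open>odd a\<close> obtain b where "a = Suc (Suc b)" "odd b"
      by (metis odd_pos Suc_pred even_Suc less_numeral_extra(3) nat.exhaust One_nat_def)
    with "1.IH" show ?thesis by simp
  qed simp
qed

lemma unit_at_pm1_qint_X:
  assumes "odd a"
  shows "unit_at_pm1 (qint X a)"
proof -
  have "poly (\<Sum>i<a. [:0, 1::int:]^i) 1 = int a" "poly (\<Sum>i<a. [:0, 1::int:]^i) (-1) = 1"
    using sum_neg_one_power_odd[OF assms] by (simp_all add: poly_sum)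
  moreover have "a > 0" using assms by (simp add: odd_pos)
  ultimately show ?thesis
    unfolding qint_X_eq_to_fract by (intro unit_at_pm1_to_fract) (simp add: nonzero_at_pm1_def)
qed

lemma unit_at_pm1_qint_X2:
  assumes "a > 0"
  shows "unit_at_pm1 (qint (X^2) a)"
proof -
  have "poly (\<Sum>i<a. [:0, 1::int:]^(2*i)) 1 = int a" "poly (\<Sum>i<a. [:0, 1::int:]^(2*i)) (-1) = int a"
    by (simp_all add: poly_sum power_mult)
  then show ?thesis
    unfolding qint_X2_eq_to_fract using assms by (intro unit_at_pm1_to_fract) (simp add: nonzero_at_pm1_def)
qed

lemma is_int_poly_qint [intro]: "is_int_poly q \<Longrightarrow> is_int_poly (qint q a)"
  unfolding qint_def by blast

lemma defined_at_pm1_interp_node: "defined_at_pm1 (X.interp_node n)"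
  unfolding X.interp_node_def divide_inverse
  by (intro defined_at_pm1_mult defined_at_pm1_if_is_int_poly defined_at_pm1_inverse) blast+

lemma unit_at_pm1_interp_node_diff: "j < i \<Longrightarrow> unit_at_pm1 (X.interp_node i - X.interp_node j)"
  unfolding X.interp_node_diff by (intro unit_at_pm1_divide unit_at_pm1_mult unit_at_pm1_qint_X2) auto

lemma is_int_poly_S: "is_int_poly (S m n X)"
proof -
  have "(1 - X^(c*k)) / (1 - X^c) = qint (X^c) k" if "c > 0" for c k
    using one_minus_power_eq_qint[of "X^c" k] X_power_ne_1[OF that] by (simp add: power_mult)
  from this[of 4] this[of 2] show ?thesis
    unfolding S_def by simp (intro is_int_poly_sum is_int_poly_mult is_int_poly_power is_int_poly_qint is_int_poly_X)
qed

lemma defined_at_pm1_interp_coeff: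
  assumes "m \<ge> 1" "k \<le> m"
  shows "defined_at_pm1 (X.interp_coeff m k)"
proof -
  define \<Psi> where "\<Psi> = (\<Sum>j=0..m. monom (X.interp_coeff m j) (m-j))"
  have "coeff \<Psi> (m-k) = (\<Sum>j=0..m. if j = k then X.interp_coeff m j else 0)"
    unfolding \<Psi>_def coeff_sum coeff_monom using assms(2) by (intro sum.cong refl) auto
  then have "coeff \<Psi> (m-k) = X.interp_coeff m k"
    using assms(2) by simp
  moreover have "degree \<Psi> \<le> m"
    unfolding \<Psi>_def by (intro degree_sum_le) (auto intro: order.trans[OF degree_monom_le])
  moreover have "defined_at_pm1 (poly \<Psi> (X.interp_node n))" for n
  proof -
    define G where "G = qint X (2*n+1) * X^(2*n*m)"
    have "unit_at_pm1 G"
      unfolding G_def using unit_at_pm1_qint_X[of "2*n+1"] by auto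
    have "S (2*m) n X = G * poly \<Psi> (X.interp_node n)"
      unfolding X.S_eq_interpolation[OF assms(1)] G_def by (simp add: \<Psi>_def poly_sum poly_monom)
    then have "poly \<Psi> (X.interp_node n) = S (2*m) n X * inverse G"
      using unit_at_pm1_nonzero[OF \<open>unit_at_pm1 G\<close>] by (simp add: field_simps)
    then show ?thesis
      using is_int_poly_S \<open>unit_at_pm1 G\<close> by auto
  qed
  moreover have "X.interp_node i \<noteq> X.interp_node j \<and> defined_at_pm1 (inverse (X.interp_node i - X.interp_node j))" if "j < i" for i j
  proof -
    have "unit_at_pm1 (X.interp_node i - X.interp_node j)"
      using that by (rule unit_at_pm1_interp_node_diff)
    then show ?thesis
      using unit_at_pm1_nonzero[of "X.interp_node i - X.interp_node j"] by auto
  qed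
  ultimately show ?thesis
    using coeff_closed_by_interpolation[of defined_at_pm1 \<Psi> m X.interp_node "m-k"] defined_at_pm1_interp_node
    by auto
qed

lemma defined_at_pm1_Q:
  assumes "m \<ge> 1" "k \<le> m"
  shows "defined_at_pm1 (Q m k X)"
proof -
  have "unit_at_pm1 (\<Prod>j=0..k. qint X (2*m-2*j+1))"
    by (intro unit_at_pm1_prod unit_at_pm1_qint_X) simp
  moreover have "unit_at_pm1 (1 + X^2)"
    unfolding X_eq_to_fract by (simp add: unit_at_pm1_to_fract nonzero_at_pm1_def flip: to_fract_1 to_fract_power to_fract_add)
  ultimately show ?thesis
    unfolding X.Q_eq_interp_coeff[OF assms] using defined_at_pm1_interp_coeff[OF assms] by blast
qed

lemma is_int_poly_binom_conv [intro]: "is_int_poly q \<Longrightarrow> is_int_poly (binom_conv q N r)"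
  unfolding binom_conv_def by (intro is_int_poly_sum is_int_poly_mult is_int_poly_power is_int_poly_of_nat)

lemma is_int_poly_Q_inner [intro]: "k \<le> s \<Longrightarrow> s \<le> m \<Longrightarrow> is_int_poly (Q_inner m s k X)"
  by (auto simp: Q_inner_eq_binom_conv intro!: is_int_poly_add is_int_poly_mult is_int_poly_binom_conv
      is_int_poly_power is_int_poly_X)

lemma is_int_poly_Q_mult_denominator:
  assumes "k \<le> m"
  shows "is_int_poly (Q m k X * ((1 - X)^k * (1 - X^2)^(2*k)))"
proof -
  define P U where "P = (\<Prod>j=0..k. 1 - X^(2*m-2*j+1))" and "U = (1 - X)^k * (1 - X^2)^(2*k)"
  define T where "T l = (-1)^(k-l) * of_int (binom_diff m l) * Q_inner m k l X" for l
  have "U \<noteq> 0"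
    using X_power_ne_1[of 1] X_power_ne_1[of 2] by (auto simp: U_def)
  have "Q m k X * U = P * (\<Sum>l=0..k. (-1)^(k-l) / (1 - X^(2*m-2*l+1)) * of_int (binom_diff m l) * Q_inner m k l X)"
    unfolding Q_unfold P_def[symmetric] U_def[symmetric] using \<open>U \<noteq> 0\<close> by simp
  also have "\<dots> = (\<Sum>l=0..k. T l * (P / (1 - X^(2*m-2*l+1))))"
    by (simp add: T_def sum_distrib_left mult_ac)
  also have "\<dots> = (\<Sum>l=0..k. T l * (\<Prod>j\<in>{0..k} - {l}. 1 - X^(2*m-2*j+1)))"
  proof (intro sum.cong refl)
    fix l assume "l \<in> {0..k}"
    moreover have "1 - X^(2*m-2*l+1) \<noteq> 0"
      using X_power_ne_1[of "2*m-2*l+1"] by simp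
    ultimately show "T l * (P / (1 - X^(2*m-2*l+1))) = T l * (\<Prod>j\<in>{0..k} - {l}. 1 - X^(2*m-2*j+1))"
      by (simp add: P_def prod.remove[of "{0..k}" l])
  qed
  also have "is_int_poly \<dots>"
  proof (intro is_int_poly_sum is_int_poly_mult)
    fix l assume "l \<in> {0..k}"
    then show "is_int_poly (T l)"
      unfolding T_def using assms by (intro is_int_poly_mult is_int_poly_power is_int_poly_uminus
        is_int_poly_1 is_int_poly_of_int is_int_poly_Q_inner) simp_all
  qed (auto intro!: is_int_poly_prod is_int_poly_diff is_int_poly_mult is_int_poly_power)
  finally show ?thesis
    by (simp only: U_def)
qed

lemma one_minus_X_powers:
  "(1 - X)^k * (1 - X^2)^(2*k) = (-1)^k * to_fract ([:-1, 1:]^(3*k) * [:1, 1:]^(2*k))"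
proof -
  define a b where "a = to_fract [:-1, 1::int:]" and "b = to_fract [:1, 1::int:]"
  have "1 - [:0, 1:] = - [:-1, 1::int:]" "1 - [:0, 1:]^2 = - ([:-1, 1::int:] * [:1, 1:])"
    by (simp_all add: one_pCons power2_eq_square)
  then have "1 - X = - a" "1 - X^2 = - (a * b)"
    unfolding X_eq_to_fract a_def b_def by (metis to_fract_1 to_fract_diff to_fract_uminus to_fract_mult to_fract_power)+
  moreover have "(- a)^k * (- (a * b))^(2*k) = (-1)^k * (a^(3*k) * b^(2*k))"
  proof -
    have "(- (a * b))^(2*k) = a^(2*k) * b^(2*k)"
      by (simp add: power_mult power_mult_distrib)
    moreover have "a^(3*k) = a^k * a^(2*k)"
      by (simp flip: power_add)
    ultimately show ?thesis
      by (simp add: power_minus[of a] mult_ac)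
  qed
  ultimately show ?thesis
    by (simp add: a_def b_def)
qed

lemma is_int_poly_Q:
  assumes "m \<ge> 1" "k \<le> m"
  shows "is_int_poly (Q m k X)"
proof (rule is_int_poly_if_defined_at_pm1)
  show "defined_at_pm1 (Q m k X)"
    using assms by (rule defined_at_pm1_Q)
  have "(-1)^k * (Q m k X * ((1 - X)^k * (1 - X^2)^(2*k)))
      = Q m k X * to_fract ([:-1, 1:]^(3*k) * [:1, 1:]^(2*k))"
    unfolding one_minus_X_powers
    by (simp add: mult.left_commute[of _ "Q m k X"] flip: mult.assoc power_mult_distrib)
  then show "is_int_poly (Q m k X * to_fract ([:-1, 1:]^(3*k) * [:1, 1:]^(2*k)))"
    using is_int_poly_Q_mult_denominator[OF assms(2)]
    by (metis is_int_poly_mult is_int_poly_power is_int_poly_uminus is_int_poly_1)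
qed

theorem theorem1p2:
  fixes m n :: nat
  assumes "m \<ge> 1" and "n \<ge> 1"
  shows "(\<forall>s\<le>m. \<exists>p :: int poly. Q m s X = Fract p 1)
       \<and> S (2*m) n X =
         (\<Sum>k=0..m. (-1)^k * Q m k X
            * ((1 - X^(2*n+1)) * (1 - X^(2*n))^(m-k) * (1 - X^(2*n+2))^(m-k)
               * (1 - X)^k * X^(2*k*n))
            / ((1 - X^4) * (1 - X^2) powi (2*int m - 2*int k - 1)
               * (\<Prod>i=0..k. 1 - X^(2*m-2*i+1))))"
  \<comment> \<open>the identity holds for n = 0 as well\<close>
  using is_int_poly_Q[OF assms(1)] X.S_eq_sum_Q[OF assms(1), of n]
  unfolding is_int_poly_def to_fract_def by blast

end
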